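(* Consider the $(\mu+1)$ EA with clearing (any population size $\mu$, clearing radius, niche capacity and distance function) on any fitness function on $\{0,1\}^n$. The probability that, starting from a search point $x^*$, within $\mu n/16$ generations the algorithm evolves a lineage that reaches Hamming distance at least $n/2$ to its founder $x^*$ is $2^{-\Omega(n)}$.
   Context: A lineage starting from $x^*$ is a sequence $x^*=z_0,z_1,\dots,z_k$ of individuals where each $z_{i+1}$ is created as the offspring of parent $z_i$ in some generation; it reaches Hamming distance at least $n/2$ if some $z_i$ has Hamming distance at least $n/2$ to $x^*$. The $(\mu+1)$ EA with clearing (population size $\mu$, clearing radius $\sigma$, niche capacity $\kappa$, distance function $\mathrm{d}$), for a fitness function with positive values: in generation $t$, choose a parent $x\in P_t$ uniformly at random; create $y$ by flipping each bit of $x$ independently with probability $1/n$; let $P_t^*=P_t\cup\{y\}$; update the fitness values of $P_t^*$ by the clearing procedure: sort $P_t^*$ by decreasing fitness; for $i=1,\dots,|P_t^*|$, if the current fitness of $P[i]$ is positive, set $w:=1$ and for $j=i+1,\dots,|P_t^*|$: if the current fitness of $P[j]$ is positive and $\mathrm{d}(P[i],P[j])<\sigma$ then, if $w<\kappa$ set $w:=w+1$, else set the fitness of $P[j]$ to $0$. Then choose $z\in P_t$ with worst (cleared) fitness uniformly at random; if the (cleared) fitness of $y$ is at least that of $z$, set $P_{t+1}=P_t^*\setminus\{z\}$, otherwise $P_{t+1}=P_t^*\setminus\{y\}$. *)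

theory Defs
  imports "HOL-Probability.Probability"
begin

definition hamming :: "bool list \<Rightarrow> bool list \<Rightarrow> nat" where
  "hamming x y = card {i. i < length x \<and> x ! i \<noteq> y ! i}"

primrec mutate :: "real \<Rightarrow> bool list \<Rightarrow> bool list pmf" where
  "mutate p [] = return_pmf []"
| "mutate p (b # bs) =
     bind_pmf (bernoulli_pmf p) (\<lambda>c. map_pmf (\<lambda>r. (if c then \<not> b else b) # r) (mutate p bs))"

text \<open>Inner loop of clearing for winner at sorted position i
  (xs sorted by decreasing fitness, vs current fitness values).\<close>
definition clear_inner ::
  "('a \<Rightarrow> 'a \<Rightarrow> real) \<Rightarrow> real \<Rightarrow> nat \<Rightarrow> 'a list \<Rightarrow> nat \<Rightarrow> real list \<Rightarrow> real list" where
  "clear_inner d \<sigma> \<kappa> xs i vs =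
     snd (fold (\<lambda>j (w, vs). if vs ! j > 0 \<and> d (xs ! i) (xs ! j) < \<sigma>
                            then (if w < \<kappa> then (w + 1, vs) else (w, vs[j := 0]))
                            else (w, vs))
               [Suc i..<length xs] (1::nat, vs))"

definition clear_sorted ::
  "('a \<Rightarrow> 'a \<Rightarrow> real) \<Rightarrow> real \<Rightarrow> nat \<Rightarrow> 'a list \<Rightarrow> real list \<Rightarrow> real list" where
  "clear_sorted d \<sigma> \<kappa> xs vs =
     fold (\<lambda>i vs. if vs ! i > 0 then clear_inner d \<sigma> \<kappa> xs i vs else vs) [0..<length xs] vs"

text \<open>Cleared fitness values of the individuals of a list, reported in the original order.
  Sorting by decreasing fitness is stable (ties keep list order).\<close>
definition cleared_fitness ::
  "('a \<Rightarrow> real) \<Rightarrow> ('a \<Rightarrow> 'a \<Rightarrow> real) \<Rightarrow> real \<Rightarrow> nat \<Rightarrow> 'a list \<Rightarrow> real list" where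
  "cleared_fitness f d \<sigma> \<kappa> xs =
     (let m = length xs;
          ord = sort_key (\<lambda>i. - f (xs ! i)) [0..<m];
          sx = map (\<lambda>i. xs ! i) ord;
          cv = clear_sorted d \<sigma> \<kappa> sx (map f sx)
      in fold (\<lambda>r res. res[ord ! r := cv ! r]) [0..<m] (replicate m 0))"

text \<open>State: population (each individual with a flag "descends from x*") and a flag
  recording whether a descendant of x* at Hamming distance at least n/2 from x*
  has been created so far.\<close>
type_synonym state = "(bool list \<times> bool) list \<times> bool"

definition ea_step ::
  "nat \<Rightarrow> nat \<Rightarrow> (bool list \<Rightarrow> real) \<Rightarrow> (bool list \<Rightarrow> bool list \<Rightarrow> real) \<Rightarrow> real \<Rightarrow> nat
   \<Rightarrow> bool list \<Rightarrow> state \<Rightarrow> state pmf" where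
  "ea_step n \<mu> f d \<sigma> \<kappa> xstar s = (case s of (pop, hit) \<Rightarrow>
     bind_pmf (pmf_of_set {0..<\<mu>}) (\<lambda>i.
     bind_pmf (mutate (1 / real n) (fst (pop ! i))) (\<lambda>y.
       let fl = snd (pop ! i);
           hit' = (hit \<or> (fl \<and> real (hamming y xstar) \<ge> real n / 2));
           cl = cleared_fitness f d \<sigma> \<kappa> (map fst pop @ [y]);
           W = {k. k < \<mu> \<and> cl ! k = Min ((\<lambda>k. cl ! k) ` {0..<\<mu>})}
       in map_pmf (\<lambda>z. (if cl ! z \<le> cl ! \<mu> then pop[z := (y, fl)] else pop, hit'))
                  (pmf_of_set W))))"

definition ea_run ::
  "nat \<Rightarrow> nat \<Rightarrow> (bool list \<Rightarrow> real) \<Rightarrow> (bool list \<Rightarrow> bool list \<Rightarrow> real) \<Rightarrow> real \<Rightarrow> nat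
   \<Rightarrow> bool list \<Rightarrow> nat \<Rightarrow> state \<Rightarrow> state pmf" where
  "ea_run n \<mu> f d \<sigma> \<kappa> xstar T s0 =
     ((\<lambda>p. bind_pmf p (ea_step n \<mu> f d \<sigma> \<kappa> xstar)) ^^ T) (return_pmf s0)"

definition init_state :: "bool list list \<Rightarrow> nat \<Rightarrow> state" where
  "init_state xs0 i0 = (map (\<lambda>k. (xs0 ! k, k = i0)) [0..<length xs0], False)"

end

theory Submission
  imports Defs
begin

text \<open>Weight every descendant y of x* by 2^H(y, x*) and let the potential be the total weight of
  the descendants in the population plus a bonus K = 2^(n/2)/8 once the lineage has reached
  distance n/2. Standard bit mutation multiplies the expected weight of an offspring by at most
  (1 + 1/n)^n \<le> 3, an offspring at distance at least n/2 carries eight times the bonus, and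
  replacement never increases the weight of the survivors. As the parent is uniform among \<mu>
  individuals, the expected potential grows per generation by a factor of at most
  1 + 27/(8\<mu>), hence by at most e^(27n/128) within \<mu>n/16 generations. Starting from potential 1,
  Markov's inequality bounds the probability of the bonus by 8 e^(27n/128) 2^(-n/2) = 2^(-\<Omega>(n)).\<close>

lemma hamming_eq_sum: "hamming x y = (\<Sum>i<length x. if x ! i \<noteq> y ! i then 1 else 0)"
  unfolding hamming_def by (simp add: sum.If_cases lessThan_def Collect_conj_eq Int_commute)

lemma hamming_Cons [simp]:
  "hamming (a # as) (b # bs) = (if a \<noteq> b then 1 else 0) + hamming as bs"
  by (simp only: hamming_eq_sum length_Cons sum.lessThan_Suc_shift) simp

lemma hamming_self [simp]: "hamming x x = 0"
  by (simp add: hamming_def)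

lemma length_mutate: "y \<in> set_pmf (mutate p x) \<Longrightarrow> length y = length x"
  by (induction x arbitrary: y) auto

lemma nn_integral_mutate_pow_hamming_le:
  fixes a :: real
  assumes "length x = length z" and "1 \<le> a" and "0 \<le> p" and "p \<le> 1"
  shows "(\<integral>\<^sup>+y. ennreal (a ^ hamming y z) \<partial>mutate p x)
         \<le> ennreal (a ^ hamming x z * (1 + (a - 1) * p) ^ length x)"
  using assms(1)
proof (induction x arbitrary: z)
  case Nil
  then show ?case by simp
next
  case (Cons b bs)
  then obtain c cs where z: "z = c # cs" and len: "length bs = length cs"
    by (cases z) auto
  define M where "M = a ^ hamming bs cs * (1 + (a - 1) * p) ^ length bs"
  define g where "g = (\<lambda>flip. a ^ (if (if flip then \<not> b else b) \<noteq> c then 1 else 0) * M)"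
  have M: "0 \<le> M" using assms by (simp add: M_def)
  have tail: "(\<integral>\<^sup>+r. ennreal (a ^ hamming ((if flip then \<not> b else b) # r) z) \<partial>mutate p bs)
              \<le> ennreal (g flip)" for flip
  proof -
    define e where "e = a ^ (if (if flip then \<not> b else b) \<noteq> c then 1 else 0)"
    have "(\<integral>\<^sup>+r. ennreal (a ^ hamming ((if flip then \<not> b else b) # r) z) \<partial>mutate p bs)
        = (\<integral>\<^sup>+r. ennreal e * ennreal (a ^ hamming r cs) \<partial>mutate p bs)"
      using assms by (simp add: z e_def power_add ennreal_mult)
    also have "\<dots> = ennreal e * (\<integral>\<^sup>+r. ennreal (a ^ hamming r cs) \<partial>mutate p bs)"
      by (rule nn_integral_cmult) simp
    also have "\<dots> \<le> ennreal e * ennreal M"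
      using Cons.IH[OF len] unfolding M_def by (intro mult_left_mono) auto
    also have "\<dots> = ennreal (g flip)"
      using M assms by (simp add: g_def e_def ennreal_mult)
    finally show ?thesis .
  qed
  have "(\<integral>\<^sup>+y. ennreal (a ^ hamming y z) \<partial>mutate p (b # bs))
        \<le> (\<integral>\<^sup>+flip. ennreal (g flip) \<partial>bernoulli_pmf p)"
    by (simp add: tail nn_integral_mono)
  also have "\<dots> = ennreal (g True * p + g False * (1 - p))"
    using assms M by (simp add: g_def ennreal_mult ennreal_plus)
  also have "\<dots> \<le> ennreal (a ^ hamming (b # bs) z * (1 + (a - 1) * p) ^ length (b # bs))"
  proof (rule ennreal_leI)
    have "1 \<le> a * a"
      using mult_mono[of 1 a 1 a] assms by simp
    then have "p \<le> a * a * p"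
      using mult_right_mono[of 1 "a * a" p] assms by simp
    then have "p + a * (1 - p) \<le> a * (1 + (a - 1) * p)"
      using assms by (simp add: algebra_simps)
    then show "g True * p + g False * (1 - p) \<le> a ^ hamming (b # bs) z * (1 + (a - 1) * p) ^ length (b # bs)"
      using M by (cases "b = c") (auto simp: g_def z M_def algebra_simps dest: mult_right_mono[OF _ M])
  qed
  finally show ?case .
qed

lemma one_plus_inverse_pow_le_3: "1 \<le> n \<Longrightarrow> (1 + 1 / real n) ^ n \<le> 3"
proof -
  assume n: "1 \<le> n"
  have "(1 + 1 / real n) ^ n \<le> exp (1 / real n) ^ n"
    by (intro power_mono) (auto simp: add.commute exp_ge_add_one_self)
  also have "\<dots> = exp 1"
    using n by (simp add: exp_of_nat_mult[symmetric])
  also have "\<dots> \<le> 3"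
    by (rule exp_le)
  finally show ?thesis .
qed

definition lineage_weight :: "bool list \<Rightarrow> bool list \<times> bool \<Rightarrow> real" where
  "lineage_weight xstar v = (if snd v then 2 ^ hamming (fst v) xstar else 0)"

definition lineage_potential :: "bool list \<Rightarrow> (bool list \<times> bool) list \<Rightarrow> real" where
  "lineage_potential xstar pop = (\<Sum>v\<leftarrow>pop. lineage_weight xstar v)"

definition potential :: "bool list \<Rightarrow> real \<Rightarrow> state \<Rightarrow> real" where
  "potential xstar K s = lineage_potential xstar (fst s) + (if snd s then K else 0)"

definition wf_state :: "nat \<Rightarrow> nat \<Rightarrow> state \<Rightarrow> bool" where
  "wf_state n \<mu> s \<longleftrightarrow> length (fst s) = \<mu> \<and> (\<forall>v\<in>set (fst s). length (fst v) = n)"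

lemma lineage_weight_nonneg [simp]: "0 \<le> lineage_weight xstar v"
  by (simp add: lineage_weight_def)

lemma lineage_potential_nonneg: "0 \<le> lineage_potential xstar pop"
  unfolding lineage_potential_def by (induction pop) auto

lemma potential_nonneg: "0 \<le> K \<Longrightarrow> 0 \<le> potential xstar K s"
  using lineage_potential_nonneg[of xstar "fst s"] by (simp add: potential_def)

lemma sum_list_update_le:
  fixes xs :: "'a :: ordered_comm_monoid_add list"
  assumes "\<forall>x\<in>set xs. 0 \<le> x" and "0 \<le> a"
  shows "sum_list (xs[k := a]) \<le> sum_list xs + a"
  using assms
proof (induction xs arbitrary: k)
  case Nil
  then show ?case by simp
next
  case (Cons x xs)
  show ?case
  proof (cases k)
    case 0
    then show ?thesis
      using Cons.prems by (simp add: add.commute add_left_mono add_increasing)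
  next
    case (Suc k')
    then show ?thesis
      using Cons by (simp add: add.assoc add_left_mono)
  qed
qed

lemma lineage_potential_update_le:
  "lineage_potential xstar (pop[k := v]) \<le> lineage_potential xstar pop + lineage_weight xstar v"
  unfolding lineage_potential_def map_update by (rule sum_list_update_le) auto

lemma nn_integral_mutate_lineage_weight_le:
  assumes "length x = n" and "length xstar = n" and "1 \<le> n"
  shows "(\<integral>\<^sup>+y. ennreal (lineage_weight xstar (y, fl)) \<partial>mutate (1 / real n) x)
         \<le> ennreal (3 * lineage_weight xstar (x, fl))"
proof (cases fl)
  case True
  have "(\<integral>\<^sup>+y. ennreal (2 ^ hamming y xstar) \<partial>mutate (1 / real n) x)
        \<le> ennreal (2 ^ hamming x xstar * (1 + 1 / real n) ^ n)"
    using nn_integral_mutate_pow_hamming_le[of x xstar 2 "1 / real n"] assms by simp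
  also have "\<dots> \<le> ennreal (2 ^ hamming x xstar * 3)"
    using one_plus_inverse_pow_le_3[OF assms(3)] by (intro ennreal_leI mult_left_mono) auto
  finally show ?thesis
    using True by (simp add: lineage_weight_def mult.commute)
qed (simp add: lineage_weight_def)

lemma potential_successor_le:
  assumes "8 * K \<le> 2 powr (real n / 2)"
  shows "potential xstar K (if c then pop[k := (y, fl)] else pop,
                           hit \<or> (fl \<and> real n / 2 \<le> real (hamming y xstar)))
         \<le> potential xstar K (pop, hit) + 9/8 * lineage_weight xstar (y, fl)"
proof -
  have "(if hit \<or> (fl \<and> real n / 2 \<le> real (hamming y xstar)) then K else 0)
        \<le> (if hit then K else 0) + 1/8 * lineage_weight xstar (y, fl)"
  proof (cases "\<not> hit \<and> fl \<and> real n / 2 \<le> real (hamming y xstar)")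
    case True
    then have "2 powr (real n / 2) \<le> 2 ^ hamming y xstar"
      by (simp add: powr_realpow[symmetric])
    then show ?thesis
      using True assms by (simp add: lineage_weight_def)
  qed auto
  moreover have "lineage_potential xstar (if c then pop[k := (y, fl)] else pop)
                 \<le> lineage_potential xstar pop + lineage_weight xstar (y, fl)"
    using lineage_potential_update_le[of xstar pop k "(y, fl)"] by auto
  ultimately show ?thesis
    by (simp add: potential_def)
qed

lemma nn_integral_mutate_potential_offspring_le:
  assumes "length x = n" and "length xstar = n" and "1 \<le> n" and "0 \<le> P"
  shows "(\<integral>\<^sup>+y. ennreal (P + 9/8 * lineage_weight xstar (y, fl)) \<partial>mutate (1 / real n) x)
         \<le> ennreal (P + 27/8 * lineage_weight xstar (x, fl))"
proof -
  have "(\<integral>\<^sup>+y. ennreal (P + 9/8 * lineage_weight xstar (y, fl)) \<partial>mutate (1 / real n) x)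
        = (\<integral>\<^sup>+y. ennreal P + ennreal (9/8) * ennreal (lineage_weight xstar (y, fl)) \<partial>mutate (1 / real n) x)"
    using assms(4) by (intro nn_integral_cong) (simp add: ennreal_plus ennreal_mult[symmetric])
  also have "\<dots> = ennreal P + ennreal (9/8) * (\<integral>\<^sup>+y. ennreal (lineage_weight xstar (y, fl)) \<partial>mutate (1 / real n) x)"
    by (simp add: nn_integral_add nn_integral_cmult measure_pmf.emeasure_space_1)
  also have "\<dots> \<le> ennreal P + ennreal (9/8) * ennreal (3 * lineage_weight xstar (x, fl))"
    using nn_integral_mutate_lineage_weight_le[OF assms(1-3)] by (intro add_left_mono mult_left_mono) auto
  also have "\<dots> = ennreal (P + 27/8 * lineage_weight xstar (x, fl))"
    using assms(4) by (simp add: ennreal_plus ennreal_mult[symmetric])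
  finally show ?thesis .
qed

lemma ea_step_potential_le:
  assumes wf: "wf_state n \<mu> s" and "1 \<le> \<mu>" and "1 \<le> n" and "length xstar = n"
    and "0 \<le> K" and K: "8 * K \<le> 2 powr (real n / 2)"
  shows "(\<integral>\<^sup>+s'. ennreal (potential xstar K s') \<partial>ea_step n \<mu> f d \<sigma> \<kappa> xstar s)
         \<le> ennreal ((1 + 27 / (8 * real \<mu>)) * potential xstar K s)"
proof -
  obtain pop hit where s: "s = (pop, hit)"
    by fastforce
  define P where "P = potential xstar K (pop, hit)"
  define w where "w i = lineage_weight xstar (pop ! i)" for i
  have P: "0 \<le> P"
    using potential_nonneg[OF \<open>0 \<le> K\<close>] by (simp add: P_def)
  have parents: "set_pmf (pmf_of_set {0..<\<mu>}) = {0..<\<mu>}"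
    using \<open>1 \<le> \<mu>\<close> by simp
  have successor: "(\<integral>\<^sup>+k. ennreal (potential xstar K (if c k then pop[k := (y, fl)] else pop,
                       hit \<or> (fl \<and> real n / 2 \<le> real (hamming y xstar)))) \<partial>measure_pmf W)
                   \<le> ennreal (P + 9/8 * lineage_weight xstar (y, fl))" for c W y fl
  proof -
    have "(\<integral>\<^sup>+k. ennreal (potential xstar K (if c k then pop[k := (y, fl)] else pop,
              hit \<or> (fl \<and> real n / 2 \<le> real (hamming y xstar)))) \<partial>measure_pmf W)
          \<le> (\<integral>\<^sup>+k. ennreal (P + 9/8 * lineage_weight xstar (y, fl)) \<partial>measure_pmf W)"
      unfolding P_def by (intro nn_integral_mono ennreal_leI potential_successor_le[OF K])
    then show ?thesis
      by (simp add: measure_pmf.emeasure_space_1)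
  qed
  have offspring: "(\<integral>\<^sup>+y. ennreal (P + 9/8 * lineage_weight xstar (y, snd (pop ! i)))
                      \<partial>mutate (1 / real n) (fst (pop ! i))) \<le> ennreal (P + 27/8 * w i)"
    if "i < \<mu>" for i
    using nn_integral_mutate_potential_offspring_le[OF _ assms(4,3) P,
        where x = "fst (pop ! i)" and fl = "snd (pop ! i)"] wf that
    by (simp add: s w_def wf_state_def)
  have "(\<integral>\<^sup>+s'. ennreal (potential xstar K s') \<partial>ea_step n \<mu> f d \<sigma> \<kappa> xstar s)
        \<le> (\<integral>\<^sup>+i. ennreal (P + 27/8 * w i) \<partial>pmf_of_set {0..<\<mu>})"
    unfolding s ea_step_def Let_def prod.case nn_integral_bind_pmf nn_integral_map_pmf
    using parents
    by (intro nn_integral_mono_AE AE_pmfI order_trans[OF nn_integral_mono[OF successor] offspring]) auto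
  also have "\<dots> = (\<Sum>i<\<mu>. ennreal (P + 27/8 * w i)) / of_nat \<mu>"
    using \<open>1 \<le> \<mu>\<close> by (subst nn_integral_pmf_of_set) (auto simp: atLeast0LessThan lessThan_empty_iff)
  also have "\<dots> = ennreal ((\<Sum>i<\<mu>. P + 27/8 * w i) / real \<mu>)"
    using \<open>1 \<le> \<mu>\<close> P
    by (subst sum_ennreal, simp add: w_def, subst ennreal_of_nat_eq_real_of_nat,
        subst divide_ennreal) (auto simp: w_def intro: sum_nonneg)
  also have "(\<Sum>i<\<mu>. P + 27/8 * w i) = real \<mu> * P + 27/8 * lineage_potential xstar pop"
    using wf by (simp add: s w_def wf_state_def lineage_potential_def sum_list_sum_nth
        atLeast0LessThan sum.distrib sum_distrib_left)
  also have "ennreal ((real \<mu> * P + 27/8 * lineage_potential xstar pop) / real \<mu>)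
             \<le> ennreal ((1 + 27 / (8 * real \<mu>)) * P)"
    using \<open>1 \<le> \<mu>\<close> \<open>0 \<le> K\<close> by (intro ennreal_leI) (simp add: P_def potential_def field_simps)
  finally show ?thesis
    by (simp add: s P_def)
qed

lemma wf_state_ea_step:
  assumes "wf_state n \<mu> s" and "1 \<le> \<mu>" and "s' \<in> set_pmf (ea_step n \<mu> f d \<sigma> \<kappa> xstar s)"
  shows "wf_state n \<mu> s'"
proof -
  obtain pop hit where s: "s = (pop, hit)"
    by fastforce
  from assms(2,3) obtain i y k c hit' where "i < \<mu>"
    and y: "y \<in> set_pmf (mutate (1 / real n) (fst (pop ! i)))"
    and s': "s' = (if c then pop[k := (y, snd (pop ! i))] else pop, hit')"
    unfolding s ea_step_def Let_def by auto
  have "length y = n"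
    using length_mutate[OF y] assms(1) \<open>i < \<mu>\<close> by (auto simp: s wf_state_def)
  then show ?thesis
    using assms(1) s' set_update_subset_insert[of pop k "(y, snd (pop ! i))"]
    by (auto simp: s wf_state_def)
qed

lemma ea_run_0: "ea_run n \<mu> f d \<sigma> \<kappa> xstar 0 s0 = return_pmf s0"
  by (simp add: ea_run_def)

lemma ea_run_Suc:
  "ea_run n \<mu> f d \<sigma> \<kappa> xstar (Suc T) s0
   = bind_pmf (ea_run n \<mu> f d \<sigma> \<kappa> xstar T s0) (ea_step n \<mu> f d \<sigma> \<kappa> xstar)"
  by (simp add: ea_run_def)

lemma wf_state_ea_run:
  assumes "wf_state n \<mu> s0" and "1 \<le> \<mu>" and "s \<in> set_pmf (ea_run n \<mu> f d \<sigma> \<kappa> xstar T s0)"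
  shows "wf_state n \<mu> s"
  using assms(3)
proof (induction T arbitrary: s)
  case 0
  then show ?case
    using assms(1) by (simp add: ea_run_0)
next
  case (Suc T)
  then obtain s' where "s' \<in> set_pmf (ea_run n \<mu> f d \<sigma> \<kappa> xstar T s0)"
    and "s \<in> set_pmf (ea_step n \<mu> f d \<sigma> \<kappa> xstar s')"
    unfolding ea_run_Suc set_bind_pmf by blast
  then show ?case
    using Suc.IH wf_state_ea_step[OF _ assms(2)] by blast
qed

lemma ea_run_potential_le:
  assumes wf: "wf_state n \<mu> s0" and "1 \<le> \<mu>" and "1 \<le> n" and "length xstar = n"
    and "0 \<le> K" and "8 * K \<le> 2 powr (real n / 2)"
  shows "(\<integral>\<^sup>+s. ennreal (potential xstar K s) \<partial>ea_run n \<mu> f d \<sigma> \<kappa> xstar T s0)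
         \<le> ennreal ((1 + 27 / (8 * real \<mu>)) ^ T * potential xstar K s0)"
proof (induction T)
  case 0
  then show ?case
    by (simp add: ea_run_0)
next
  case (Suc T)
  define r where "r = 1 + 27 / (8 * real \<mu>)"
  have r: "0 \<le> r"
    by (simp add: r_def)
  have "(\<integral>\<^sup>+s. ennreal (potential xstar K s) \<partial>ea_run n \<mu> f d \<sigma> \<kappa> xstar (Suc T) s0)
        = (\<integral>\<^sup>+s. (\<integral>\<^sup>+s'. ennreal (potential xstar K s') \<partial>ea_step n \<mu> f d \<sigma> \<kappa> xstar s)
             \<partial>ea_run n \<mu> f d \<sigma> \<kappa> xstar T s0)"
    by (simp add: ea_run_Suc nn_integral_bind_pmf)
  also have "\<dots> \<le> (\<integral>\<^sup>+s. ennreal r * ennreal (potential xstar K s) \<partial>ea_run n \<mu> f d \<sigma> \<kappa> xstar T s0)"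
  proof (intro nn_integral_mono_AE AE_pmfI)
    fix s
    assume "s \<in> set_pmf (ea_run n \<mu> f d \<sigma> \<kappa> xstar T s0)"
    then have "wf_state n \<mu> s"
      using wf_state_ea_run[OF wf \<open>1 \<le> \<mu>\<close>] by blast
    then have "(\<integral>\<^sup>+s'. ennreal (potential xstar K s') \<partial>ea_step n \<mu> f d \<sigma> \<kappa> xstar s)
               \<le> ennreal (r * potential xstar K s)"
      unfolding r_def using assms by (intro ea_step_potential_le) auto
    then show "(\<integral>\<^sup>+s'. ennreal (potential xstar K s') \<partial>ea_step n \<mu> f d \<sigma> \<kappa> xstar s)
               \<le> ennreal r * ennreal (potential xstar K s)"
      using ennreal_mult[OF r potential_nonneg[OF \<open>0 \<le> K\<close>]] by simp
  qed
  also have "\<dots> = ennreal r * (\<integral>\<^sup>+s. ennreal (potential xstar K s) \<partial>ea_run n \<mu> f d \<sigma> \<kappa> xstar T s0)"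
    by (simp add: nn_integral_cmult)
  also have "\<dots> \<le> ennreal r * ennreal (r ^ T * potential xstar K s0)"
    using Suc.IH by (intro mult_left_mono) (auto simp: r_def)
  also have "\<dots> = ennreal (r ^ Suc T * potential xstar K s0)"
    using r potential_nonneg[OF \<open>0 \<le> K\<close>] by (simp add: ennreal_mult[symmetric] mult.assoc)
  finally show ?case
    by (simp add: r_def)
qed

lemma potential_init_state:
  assumes "i0 < length xs0"
  shows "potential (xs0 ! i0) K (init_state xs0 i0) = 1"
proof -
  have "lineage_potential (xs0 ! i0) (map (\<lambda>k. (xs0 ! k, k = i0)) [0..<length xs0])
        = (\<Sum>k\<in>{0..<length xs0}. if k = i0 then 1 else 0)"
    unfolding lineage_potential_def map_map
    by (subst sum_set_upt_conv_sum_list_nat[symmetric]) (auto simp: lineage_weight_def intro: sum.cong)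
  also have "\<dots> = 1"
    using assms by simp
  finally show ?thesis
    by (simp add: potential_def init_state_def)
qed

lemma prob_le_nn_integral_div:
  fixes g :: "'a \<Rightarrow> real"
  assumes "0 < K" and "\<And>s. 0 \<le> g s" and "\<And>s. s \<in> A \<Longrightarrow> K \<le> g s"
    and "(\<integral>\<^sup>+s. ennreal (g s) \<partial>measure_pmf M) \<le> ennreal B" and "0 \<le> B"
  shows "measure_pmf.prob M A \<le> B / K"
proof -
  have "ennreal (K * measure_pmf.prob M A) = (\<integral>\<^sup>+s. ennreal K * indicator A s \<partial>measure_pmf M)"
    using assms(1) by (simp add: nn_integral_cmult measure_pmf.emeasure_eq_measure ennreal_mult)
  also have "\<dots> \<le> (\<integral>\<^sup>+s. ennreal (g s) \<partial>measure_pmf M)"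
    using assms(2,3) by (intro nn_integral_mono) (auto simp: indicator_def)
  also have "\<dots> \<le> ennreal B"
    by (rule assms(4))
  finally have "K * measure_pmf.prob M A \<le> B"
    using assms(5) by simp
  then show ?thesis
    using assms(1) by (simp add: field_simps)
qed

lemma one_plus_div_pow_le_exp:
  fixes \<mu> c x :: real
  assumes "0 < \<mu>" and "0 \<le> c" and "real T \<le> \<mu> * x"
  shows "(1 + c / \<mu>) ^ T \<le> exp (c * x)"
proof -
  have "(1 + c / \<mu>) ^ T \<le> exp (c / \<mu>) ^ T"
    using assms by (intro power_mono) (auto simp: add.commute exp_ge_add_one_self)
  also have "\<dots> = exp (real T * (c / \<mu>))"
    by (rule exp_of_nat_mult[symmetric])
  also have "\<dots> \<le> exp (\<mu> * x * (c / \<mu>))"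
    using assms by (intro exp_mono mult_right_mono) auto
  also have "\<dots> = exp (c * x)"
    using assms(1) by simp
  finally show ?thesis .
qed

lemma growth_div_threshold_le:
  assumes "300 \<le> n" and "1 \<le> \<mu>"
  shows "(1 + 27 / (8 * real \<mu>)) ^ nat \<lfloor>real \<mu> * real n / 16\<rfloor> / (2 powr (real n / 2) / 8)
         \<le> 2 powr (- (1/64) * real n)"
proof -
  have "(1 + (27/8) / real \<mu>) ^ nat \<lfloor>real \<mu> * real n / 16\<rfloor> \<le> exp (27/8 * (real n / 16))"
    using assms(2) of_int_floor_le[of "real \<mu> * real n / 16"] by (intro one_plus_div_pow_le_exp) auto
  moreover have "exp (real n / 3) \<le> 2 powr (real n / 2)"
    using mult_right_mono[OF ln2_ge_two_thirds, of "real n / 2"] by (simp add: powr_def mult.commute)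
  ultimately have "(1 + 27 / (8 * real \<mu>)) ^ nat \<lfloor>real \<mu> * real n / 16\<rfloor> / (2 powr (real n / 2) / 8)
                   \<le> exp (27 * real n / 128) / (exp (real n / 3) / 8)"
    by (intro frac_le) auto
  also have "\<dots> = 8 * exp (- (47 * real n / 384))"
    by (simp add: exp_minus field_simps flip: exp_add)
  also have "\<dots> \<le> exp (41 * real n / 384) * exp (- (47 * real n / 384))"
  proof (intro mult_right_mono)
    show "8 \<le> exp (41 * real n / 384)"
      using assms(1) exp_ge_add_one_self[of "41 * real n / 384"] by linarith
  qed simp
  also have "\<dots> = exp (- (real n / 64))"
    by (simp flip: exp_add)
  also have "\<dots> \<le> 2 powr (- (1/64) * real n)"
    using mult_left_mono[of "ln 2" 1 "real n"] ln_2_less_1 by (simp add: powr_def)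
  finally show ?thesis .
qed

theorem corollary3:
  shows "\<exists>c>0. \<exists>n0::nat. \<forall>n\<ge>n0. \<forall>(\<mu>::nat) (\<sigma>::real) (\<kappa>::nat)
           (d :: bool list \<Rightarrow> bool list \<Rightarrow> real) (f :: bool list \<Rightarrow> real)
           (xs0 :: bool list list) (i0::nat).
         \<mu> \<ge> 1 \<longrightarrow> (\<forall>x. length x = n \<longrightarrow> f x > 0) \<longrightarrow>
         length xs0 = \<mu> \<longrightarrow> (\<forall>x\<in>set xs0. length x = n) \<longrightarrow> i0 < \<mu> \<longrightarrow>
         measure_pmf.prob
           (ea_run n \<mu> f d \<sigma> \<kappa> (xs0 ! i0) (nat \<lfloor>real \<mu> * real n / 16\<rfloor>) (init_state xs0 i0))
           {s. snd s}
         \<le> 2 powr (- c * real n)"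
proof (intro exI[of _ "1/64"] conjI exI[of _ "300::nat"] allI impI)
  fix n \<mu> \<kappa> :: nat and \<sigma> :: real and d :: "bool list \<Rightarrow> bool list \<Rightarrow> real"
    and f :: "bool list \<Rightarrow> real" and xs0 :: "bool list list" and i0 :: nat
  assume n: "300 \<le> n" and \<mu>: "1 \<le> \<mu>" and len: "length xs0 = \<mu>"
    and lengths: "\<forall>x\<in>set xs0. length x = n" and i0: "i0 < \<mu>"
  define K :: real where "K = 2 powr (real n / 2) / 8"
  define T where "T = nat \<lfloor>real \<mu> * real n / 16\<rfloor>"
  have "wf_state n \<mu> (init_state xs0 i0)"
    using lengths len by (auto simp: wf_state_def init_state_def)
  then have "(\<integral>\<^sup>+s. ennreal (potential (xs0 ! i0) K s)
               \<partial>ea_run n \<mu> f d \<sigma> \<kappa> (xs0 ! i0) T (init_state xs0 i0))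
             \<le> ennreal ((1 + 27 / (8 * real \<mu>)) ^ T * potential (xs0 ! i0) K (init_state xs0 i0))"
    using \<mu> n lengths i0 len by (intro ea_run_potential_le) (auto simp: K_def)
  then have "measure_pmf.prob (ea_run n \<mu> f d \<sigma> \<kappa> (xs0 ! i0) T (init_state xs0 i0)) {s. snd s}
             \<le> (1 + 27 / (8 * real \<mu>)) ^ T / K"
    using potential_init_state[of i0 xs0 K] i0 len
    by (intro prob_le_nn_integral_div[where g = "potential (xs0 ! i0) K"])
      (auto simp: K_def potential_def lineage_potential_nonneg)
  also have "\<dots> \<le> 2 powr (- (1/64) * real n)"
    using growth_div_threshold_le[OF n \<mu>] by (simp add: T_def K_def)
  finally show "measure_pmf.prob (ea_run n \<mu> f d \<sigma> \<kappa> (xs0 ! i0) (nat \<lfloor>real \<mu> * real n / 16\<rfloor>)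
                  (init_state xs0 i0)) {s. snd s} \<le> 2 powr (- (1/64) * real n)"
    by (simp add: T_def)
qed (simp)

end
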